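(* Let $G$ be a group with a subgroup $\Gamma$ of index $m$ and a subgroup $H\lhd\Gamma$ of cardinality $d$ such that $\Gamma/H$ is abelian, and let $F=(F_n)_{n=1}^\infty$ be a left-Følner sequence for $G$. Then $\textup{cr}_F(G)\ge\frac{1}{m^2d}$.
   Context: $F$ is a left-Følner sequence if each $F_n$ is a finite subset of $G$ and $|xF_n\triangle F_n|/|F_n|\to0$ for every $x\in G$. With $\mathcal{C}(G)$ the set of conjugacy classes of $G$, $\textup{cr}_F(G)=\limsup_{n\to\infty}\frac{|\{C\in\mathcal{C}(G):C\cap F_n\ne\varnothing\}|}{|F_n|}$. *)

theory Defs
  imports "HOL-Algebra.Algebra" "HOL-Analysis.Analysis"
begin

definition conj_class :: "('a, 'b) monoid_scheme \<Rightarrow> 'a \<Rightarrow> 'a set" where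
  "conj_class G x = {g \<otimes>\<^bsub>G\<^esub> x \<otimes>\<^bsub>G\<^esub> inv\<^bsub>G\<^esub> g | g. g \<in> carrier G}"

definition conj_classes :: "('a, 'b) monoid_scheme \<Rightarrow> 'a set set" where
  "conj_classes G = conj_class G ` carrier G"

definition left_Folner :: "('a, 'b) monoid_scheme \<Rightarrow> (nat \<Rightarrow> 'a set) \<Rightarrow> bool" where
  "left_Folner G F \<longleftrightarrow>
     (\<forall>n. finite (F n) \<and> F n \<noteq> {} \<and> F n \<subseteq> carrier G) \<and>
     (\<forall>x\<in>carrier G.
        (\<lambda>n. real (card (((x <#\<^bsub>G\<^esub> F n) - F n) \<union> (F n - (x <#\<^bsub>G\<^esub> F n))))
              / real (card (F n))) \<longlonglongrightarrow> 0)"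

definition commuting_ratio :: "('a, 'b) monoid_scheme \<Rightarrow> (nat \<Rightarrow> 'a set) \<Rightarrow> ereal" where
  "commuting_ratio G F =
     limsup (\<lambda>n. ereal (real (card {C \<in> conj_classes G. C \<inter> F n \<noteq> {}}) / real (card (F n))))"

end

theory Submission
  imports Defs
begin

text \<open>Since \<open>\<Gamma>/H\<close> is abelian, conjugating an element of \<open>\<Gamma>\<close> by elements of a fixed
  right coset \<open>\<Gamma>g\<close> only moves it inside one right coset of \<open>H\<close>; so every conjugacy class
  of \<open>G\<close> meets \<open>\<Gamma>\<close> in at most \<open>md\<close> elements, and \<open>F\<^sub>n \<inter> \<Gamma>\<close> meets at least
  \<open>|F\<^sub>n \<inter> \<Gamma>|/(md)\<close> classes. On the other hand, with coset representatives
  \<open>t\<^sub>1, \<dots>, t\<^sub>m\<close> one has \<open>|F\<^sub>n| \<le> m |F\<^sub>n \<inter> \<Gamma>| + \<Sum>\<^sub>i |t\<^sub>i F\<^sub>n - F\<^sub>n|\<close>, and the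
  error term is \<open>o(|F\<^sub>n|)\<close> by the Folner property.\<close>

lemma (in group) conj_class_self: "x \<in> carrier G \<Longrightarrow> x \<in> conj_class G x"
  unfolding conj_class_def by (rule CollectI, rule exI[of _ \<one>]) simp

lemma (in group) conj_class_subset:
  assumes "z \<in> carrier G" "y \<in> conj_class G z"
  shows "conj_class G y \<subseteq> conj_class G z"
proof
  obtain g where g: "g \<in> carrier G" "y = g \<otimes> z \<otimes> inv g"
    using assms(2) unfolding conj_class_def by auto
  fix w assume "w \<in> conj_class G y"
  then obtain k where k: "k \<in> carrier G" "w = k \<otimes> y \<otimes> inv k"
    unfolding conj_class_def by auto
  have "w = (k \<otimes> g) \<otimes> z \<otimes> inv (k \<otimes> g)"
    using k g assms(1) by (simp add: m_assoc inv_mult_group)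
  with k g show "w \<in> conj_class G z"
    unfolding conj_class_def by blast
qed

lemma (in group) conj_class_sym:
  assumes "z \<in> carrier G" "y \<in> conj_class G z"
  shows "z \<in> conj_class G y"
proof -
  obtain g where g: "g \<in> carrier G" "y = g \<otimes> z \<otimes> inv g"
    using assms(2) unfolding conj_class_def by auto
  then have "z = inv g \<otimes> y \<otimes> inv (inv g)"
    using assms(1) by (simp add: m_assoc flip: m_assoc[of "inv g" g])
  with g show ?thesis
    unfolding conj_class_def by blast
qed

lemma (in group) conj_class_eq:
  assumes "z \<in> carrier G" "y \<in> conj_class G z"
  shows "conj_class G y = conj_class G z"
proof -
  have "y \<in> carrier G"
    using assms unfolding conj_class_def by auto
  with assms show ?thesis
    by (meson conj_class_subset conj_class_sym subset_antisym)
qed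

lemma (in group) conj_classes_meeting_subset_image:
  assumes "A \<subseteq> carrier G"
  shows "{C \<in> conj_classes G. C \<inter> A \<noteq> {}} \<subseteq> conj_class G ` A"
proof
  fix C assume "C \<in> {C \<in> conj_classes G. C \<inter> A \<noteq> {}}"
  then obtain z y where "z \<in> carrier G" "C = conj_class G z" "y \<in> C" "y \<in> A"
    unfolding conj_classes_def by auto
  then show "C \<in> conj_class G ` A"
    using conj_class_eq by blast
qed

lemma (in group) card_le_mult_card_conj_classes_meeting:
  assumes "finite A" "A \<subseteq> carrier G"
    and bound: "\<And>C. C \<in> conj_classes G \<Longrightarrow> card (C \<inter> A) \<le> b"
  shows "card A \<le> b * card {C \<in> conj_classes G. C \<inter> A \<noteq> {}}"
proof -
  let ?K = "{C \<in> conj_classes G. C \<inter> A \<noteq> {}}"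
  have fin: "finite ?K"
    using finite_subset[OF conj_classes_meeting_subset_image] assms(1,2) by blast
  have "A = (\<Union>C\<in>?K. C \<inter> A)"
    using assms(2) conj_class_self unfolding conj_classes_def by blast
  then have "card A \<le> (\<Sum>C\<in>?K. card (C \<inter> A))"
    by (metis card_UN_le fin)
  also have "\<dots> \<le> card ?K * b"
    using sum_bounded_above[of ?K "\<lambda>C. card (C \<inter> A)" b] bound by simp
  finally show ?thesis
    by (simp add: mult.commute)
qed

lemma (in group) card_translate_into_le:
  assumes "finite F" "F \<subseteq> carrier G" "t \<in> carrier G"
  shows "card {y \<in> F. t \<otimes> y \<in> S} \<le> card (F \<inter> S) + card ((t <# F) - F)"
proof -
  have "inj_on (\<lambda>y. t \<otimes> y) {y \<in> F. t \<otimes> y \<in> S}"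
    by (rule inj_on_subset[OF inj_on_cmult[OF assms(3)]]) (use assms(2) in auto)
  moreover have "(\<lambda>y. t \<otimes> y) ` {y \<in> F. t \<otimes> y \<in> S} \<subseteq> (F \<inter> S) \<union> ((t <# F) - F)"
    unfolding l_coset_def by blast
  moreover have "finite ((F \<inter> S) \<union> ((t <# F) - F))"
    using assms(1) unfolding l_coset_def by simp
  ultimately have "card {y \<in> F. t \<otimes> y \<in> S} \<le> card ((F \<inter> S) \<union> ((t <# F) - F))"
    by (rule card_inj_on_le)
  then show ?thesis
    using card_Un_le le_trans by blast
qed

lemma (in group) card_le_sum_translates:
  assumes "finite T" "T \<subseteq> carrier G" "finite F" "F \<subseteq> carrier G"
    and cover: "\<And>y. y \<in> carrier G \<Longrightarrow> \<exists>t\<in>T. t \<otimes> y \<in> S"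
  shows "card F \<le> card T * card (F \<inter> S) + (\<Sum>t\<in>T. card ((t <# F) - F))"
proof -
  have "F = (\<Union>t\<in>T. {y \<in> F. t \<otimes> y \<in> S})"
    using cover assms(4) by auto
  then have "card F \<le> (\<Sum>t\<in>T. card {y \<in> F. t \<otimes> y \<in> S})"
    by (metis card_UN_le assms(1))
  also have "\<dots> \<le> (\<Sum>t\<in>T. card (F \<inter> S) + card ((t <# F) - F))"
    using card_translate_into_le assms(2-4) by (intro sum_mono) blast
  also have "\<dots> = card T * card (F \<inter> S) + (\<Sum>t\<in>T. card ((t <# F) - F))"
    by (simp add: sum.distrib)
  finally show ?thesis .
qed

lemma (in group) finite_rcoset_representatives:
  assumes "subgroup \<Gamma> G" "finite (rcosets \<Gamma>)"
  obtains T where "finite T" "T \<subseteq> carrier G" "card T \<le> card (rcosets \<Gamma>)"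
    and "\<And>y. y \<in> carrier G \<Longrightarrow> \<exists>t\<in>T. t \<otimes> y \<in> \<Gamma>"
proof
  let ?rep = "\<lambda>R. SOME r. r \<in> R"
  have rep: "?rep (\<Gamma> #> a) \<in> \<Gamma> #> a" if "a \<in> carrier G" for a
    using rcos_self[OF that assms(1)] by (rule someI)
  show "finite (?rep ` (rcosets \<Gamma>))" "card (?rep ` (rcosets \<Gamma>)) \<le> card (rcosets \<Gamma>)"
    using assms(2) card_image_le by auto
  show "?rep ` (rcosets \<Gamma>) \<subseteq> carrier G"
    using rep r_coset_subset_G[OF subgroup.subset[OF assms(1)]] unfolding RCOSETS_def by blast
  fix y assume y: "y \<in> carrier G"
  then obtain \<gamma> where "\<gamma> \<in> \<Gamma>" "?rep (\<Gamma> #> inv y) = \<gamma> \<otimes> inv y"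
    using rep[of "inv y"] unfolding r_coset_def by auto
  moreover have "\<gamma> \<in> carrier G"
    using \<open>\<gamma> \<in> \<Gamma>\<close> subgroup.subset[OF assms(1)] by blast
  ultimately have "?rep (\<Gamma> #> inv y) \<otimes> y \<in> \<Gamma>"
    using y by (simp add: m_assoc)
  moreover have "\<Gamma> #> inv y \<in> rcosets \<Gamma>"
    using rcosetsI[OF subgroup.subset[OF assms(1)]] y by simp
  ultimately show "\<exists>t\<in>?rep ` (rcosets \<Gamma>). t \<otimes> y \<in> \<Gamma>"
    by blast
qed

locale subgroup_with_abelian_quotient = group G for G (structure) +
  fixes \<Gamma> H :: "'a set"
  assumes subgroup: "subgroup \<Gamma> G"
    and normal: "H \<lhd> G\<lparr>carrier := \<Gamma>\<rparr>"
    and abelian_quotient: "comm_group (G\<lparr>carrier := \<Gamma>\<rparr> Mod H)"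
begin

lemma H_subgroup: "subgroup H G"
  using incl_subgroup[OF subgroup normal_imp_subgroup[OF normal]] .

lemma commutator_mem:
  assumes "x \<in> \<Gamma>" "y \<in> \<Gamma>"
  shows "x \<otimes> y \<otimes> inv x \<otimes> inv y \<in> H"
proof -
  have "x \<otimes> y \<otimes> inv x \<otimes> inv y \<in> derived G \<Gamma>"
    using assms unfolding derived_def by (blast intro: generate.incl)
  then show ?thesis
    using derived_of_subgroup_minimal[OF normal subgroup abelian_quotient] by blast
qed

lemma conj_mem_rcoset:
  assumes "x \<in> \<Gamma>" "y \<in> \<Gamma>"
  shows "x \<otimes> y \<otimes> inv x \<in> H #> y"
proof -
  have [simp]: "x \<in> carrier G" "y \<in> carrier G"
    using assms subgroup.subset[OF subgroup] by auto
  have "x \<otimes> y \<otimes> inv x = (x \<otimes> y \<otimes> inv x \<otimes> inv y) \<otimes> y"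
    by (simp add: m_assoc)
  then show ?thesis
    using commutator_mem[OF assms] unfolding r_coset_def by blast
qed

lemma conj_by_rcoset_subset:
  assumes "x \<in> carrier G" "g \<in> carrier G" "g \<otimes> x \<otimes> inv g \<in> \<Gamma>"
  shows "(\<lambda>k. k \<otimes> x \<otimes> inv k) ` (\<Gamma> #> g) \<subseteq> H #> (g \<otimes> x \<otimes> inv g)"
proof
  fix w assume "w \<in> (\<lambda>k. k \<otimes> x \<otimes> inv k) ` (\<Gamma> #> g)"
  then obtain \<gamma> where \<gamma>: "\<gamma> \<in> \<Gamma>" "w = (\<gamma> \<otimes> g) \<otimes> x \<otimes> inv (\<gamma> \<otimes> g)"
    unfolding r_coset_def by auto
  have "\<gamma> \<in> carrier G"
    using \<gamma>(1) subgroup.subset[OF subgroup] by auto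
  then have "w = \<gamma> \<otimes> (g \<otimes> x \<otimes> inv g) \<otimes> inv \<gamma>"
    using \<gamma>(2) assms(1,2) by (simp add: m_assoc inv_mult_group)
  then show "w \<in> H #> (g \<otimes> x \<otimes> inv g)"
    using conj_mem_rcoset[OF \<gamma>(1) assms(3)] by simp
qed

lemma card_conj_by_rcoset_Int_le:
  assumes "finite H" "x \<in> carrier G" "R \<in> rcosets \<Gamma>"
  shows "finite ((\<lambda>k. k \<otimes> x \<otimes> inv k) ` R \<inter> \<Gamma>)"
    and "card ((\<lambda>k. k \<otimes> x \<otimes> inv k) ` R \<inter> \<Gamma>) \<le> card H"
proof -
  let ?S = "(\<lambda>k. k \<otimes> x \<otimes> inv k) ` R \<inter> \<Gamma>"
  have "finite ?S \<and> card ?S \<le> card H"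
  proof (cases "?S = {}")
    case False
    then obtain g where g: "g \<in> R" "g \<otimes> x \<otimes> inv g \<in> \<Gamma>"
      by auto
    obtain a where a: "a \<in> carrier G" "R = \<Gamma> #> a"
      using assms(3) unfolding RCOSETS_def by auto
    have "g \<in> carrier G"
      using g(1) a r_coset_subset_G[OF subgroup.subset[OF subgroup]] by blast
    moreover have "R = \<Gamma> #> g"
      using repr_independence[OF _ a(1) subgroup] g(1) a(2) by simp
    ultimately have "?S \<subseteq> H #> (g \<otimes> x \<otimes> inv g)"
      using conj_by_rcoset_subset[OF assms(2) _ g(2)] by blast
    moreover have "H #> (g \<otimes> x \<otimes> inv g) \<in> rcosets H"
      using rcosetsI[OF subgroup.subset[OF H_subgroup]] \<open>g \<in> carrier G\<close> assms(2) by simp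
    ultimately show ?thesis
      using rcosets_finite[OF _ _ assms(1)] card_rcosets_equal subgroup.subset[OF H_subgroup]
      by (metis card_mono finite_subset)
  qed simp
  then show "finite ?S" "card ?S \<le> card H"
    by auto
qed

lemma card_conj_class_Int_le:
  assumes "finite (rcosets \<Gamma>)" "finite H" "x \<in> carrier G"
  shows "finite (conj_class G x \<inter> \<Gamma>)"
    and "card (conj_class G x \<inter> \<Gamma>) \<le> card (rcosets \<Gamma>) * card H"
proof -
  let ?S = "\<lambda>R. (\<lambda>k. k \<otimes> x \<otimes> inv k) ` R \<inter> \<Gamma>"
  have cover: "conj_class G x \<inter> \<Gamma> \<subseteq> (\<Union>R\<in>rcosets \<Gamma>. ?S R)"
  proof
    fix w assume "w \<in> conj_class G x \<inter> \<Gamma>"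
    then obtain k where "k \<in> carrier G" "w = k \<otimes> x \<otimes> inv k" "w \<in> \<Gamma>"
      unfolding conj_class_def by auto
    then show "w \<in> (\<Union>R\<in>rcosets \<Gamma>. ?S R)"
      using rcos_self[OF _ subgroup] rcosetsI[OF subgroup.subset[OF subgroup]] by blast
  qed
  have fin: "finite (\<Union>R\<in>rcosets \<Gamma>. ?S R)"
    using assms card_conj_by_rcoset_Int_le(1) by blast
  then show "finite (conj_class G x \<inter> \<Gamma>)"
    using cover finite_subset by blast
  have "card (conj_class G x \<inter> \<Gamma>) \<le> (\<Sum>R\<in>rcosets \<Gamma>. card (?S R))"
    using card_mono[OF fin cover] card_UN_le[OF assms(1)] by (rule le_trans)
  also have "\<dots> \<le> card (rcosets \<Gamma>) * card H"
    using sum_bounded_above[of "rcosets \<Gamma>" "\<lambda>R. card (?S R)" "card H"]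
      card_conj_by_rcoset_Int_le(2)[OF assms(2,3)] by simp
  finally show "card (conj_class G x \<inter> \<Gamma>) \<le> card (rcosets \<Gamma>) * card H" .
qed

lemma card_Int_le_conj_classes_meeting:
  assumes "finite (rcosets \<Gamma>)" "finite H" "finite F" "F \<subseteq> carrier G"
  shows "card (F \<inter> \<Gamma>) \<le> card (rcosets \<Gamma>) * card H * card {C \<in> conj_classes G. C \<inter> F \<noteq> {}}"
proof -
  have "card (C \<inter> (F \<inter> \<Gamma>)) \<le> card (rcosets \<Gamma>) * card H" if C: "C \<in> conj_classes G" for C
  proof -
    obtain x where "x \<in> carrier G" "C = conj_class G x"
      using C unfolding conj_classes_def by blast
    then show ?thesis
      using card_conj_class_Int_le[OF assms(1,2)] card_mono[of "C \<inter> \<Gamma>" "C \<inter> (F \<inter> \<Gamma>)"]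
      by (meson Int_mono order.refl inf_le2 le_trans)
  qed
  then have "card (F \<inter> \<Gamma>) \<le> card (rcosets \<Gamma>) * card H * card {C \<in> conj_classes G. C \<inter> (F \<inter> \<Gamma>) \<noteq> {}}"
    using card_le_mult_card_conj_classes_meeting[of "F \<inter> \<Gamma>"] assms(3,4) by blast
  also have "\<dots> \<le> card (rcosets \<Gamma>) * card H * card {C \<in> conj_classes G. C \<inter> F \<noteq> {}}"
    using finite_subset[OF conj_classes_meeting_subset_image[OF assms(4)]] assms(3)
    by (intro mult_le_mono2 card_mono) auto
  finally show ?thesis .
qed

lemma conj_classes_meeting_ratio_ge:
  assumes "finite (rcosets \<Gamma>)" "finite H"
    and T: "finite T" "T \<subseteq> carrier G" "card T \<le> card (rcosets \<Gamma>)"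
      "\<And>y. y \<in> carrier G \<Longrightarrow> \<exists>t\<in>T. t \<otimes> y \<in> \<Gamma>"
    and F: "finite F" "F \<noteq> {}" "F \<subseteq> carrier G"
  shows "(1 - (\<Sum>t\<in>T. real (card ((t <# F) - F)) / real (card F)))
           / (real (card (rcosets \<Gamma>)) ^ 2 * real (card H))
         \<le> real (card {C \<in> conj_classes G. C \<inter> F \<noteq> {}}) / real (card F)"
proof -
  define m d k S where "m = card (rcosets \<Gamma>)" and "d = card H"
    and "k = card {C \<in> conj_classes G. C \<inter> F \<noteq> {}}" and "S = (\<Sum>t\<in>T. card ((t <# F) - F))"
  have "m > 0"
    using assms(1) rcosetsI[OF subgroup.subset[OF subgroup] one_closed] card_gt_0_iff
    unfolding m_def by blast
  moreover have "d > 0"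
    using assms(2) subgroup.one_closed[OF H_subgroup] card_gt_0_iff unfolding d_def by blast
  ultimately have md: "real m ^ 2 * real d > 0"
    by simp
  have "card T * card (F \<inter> \<Gamma>) \<le> m * (m * d * k)"
    using T(3) card_Int_le_conj_classes_meeting[OF assms(1,2) F(1,3)]
    unfolding m_def d_def k_def by (rule mult_le_mono)
  then have "card F \<le> m * (m * d * k) + S"
    using card_le_sum_translates[OF T(1,2) F(1,3) T(4)] unfolding S_def by linarith
  then have "real (card F) - real S \<le> real m ^ 2 * real d * real k"
    by (simp add: power2_eq_square mult.assoc flip: of_nat_mult of_nat_add)
  moreover have "real (card F) > 0"
    using F(1,2) by (simp add: card_gt_0_iff)
  ultimately have "(real (card F) - real S) / real (card F) \<le> real m ^ 2 * real d * real k / real (card F)"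
    by (intro divide_right_mono) auto
  with \<open>real (card F) > 0\<close> have "1 - real S / real (card F) \<le> real m ^ 2 * real d * (real k / real (card F))"
    by (simp add: diff_divide_distrib)
  then show ?thesis
    using md unfolding m_def d_def k_def S_def
    by (simp add: sum_divide_distrib pos_divide_le_eq mult.commute)
qed

end

lemma left_Folner_translate_diff_tendsto_0:
  assumes "left_Folner G F" "x \<in> carrier G"
  shows "(\<lambda>n. real (card ((x <#\<^bsub>G\<^esub> F n) - F n)) / real (card (F n))) \<longlonglongrightarrow> 0"
proof (rule tendsto_sandwich[where f = "\<lambda>n. 0"])
  let ?D = "\<lambda>n. ((x <#\<^bsub>G\<^esub> F n) - F n) \<union> (F n - (x <#\<^bsub>G\<^esub> F n))"
  show "(\<lambda>n. real (card (?D n)) / real (card (F n))) \<longlonglongrightarrow> 0"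
    using assms unfolding left_Folner_def by blast
  have "finite (F n)" for n
    using assms(1) unfolding left_Folner_def by blast
  then have "card ((x <#\<^bsub>G\<^esub> F n) - F n) \<le> card (?D n)" for n
    unfolding l_coset_def by (intro card_mono) auto
  then show "\<forall>\<^sub>F n in sequentially.
      real (card ((x <#\<^bsub>G\<^esub> F n) - F n)) / real (card (F n)) \<le> real (card (?D n)) / real (card (F n))"
    by (intro always_eventually allI divide_right_mono) auto
qed auto

lemma limsup_ge_of_lower_bound:
  fixes r e :: "nat \<Rightarrow> real"
  assumes "e \<longlonglongrightarrow> 0" "\<And>n. c - e n \<le> r n"
  shows "ereal c \<le> limsup (\<lambda>n. ereal (r n))"
proof -
  have "(\<lambda>n. ereal (c - e n)) \<longlonglongrightarrow> ereal c"
    using tendsto_diff[OF tendsto_const assms(1), of c] by (intro tendsto_ereal) simp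
  then have "ereal c = limsup (\<lambda>n. ereal (c - e n))"
    by (rule lim_imp_Limsup[OF trivial_limit_sequentially, symmetric])
  also have "\<dots> \<le> limsup (\<lambda>n. ereal (r n))"
    by (rule Limsup_mono) (simp add: assms(2))
  finally show ?thesis .
qed

theorem proposition1p25:
  fixes G :: "('a, 'b) monoid_scheme" and \<Gamma> H :: "'a set" and F :: "nat \<Rightarrow> 'a set"
    and m d :: nat
  assumes "group G"
    and "subgroup \<Gamma> G"
    and "finite (rcosets\<^bsub>G\<^esub> \<Gamma>)" and "card (rcosets\<^bsub>G\<^esub> \<Gamma>) = m"
    and "normal H (G\<lparr>carrier := \<Gamma>\<rparr>)"
    and "finite H" and "card H = d"
    and "comm_group ((G\<lparr>carrier := \<Gamma>\<rparr>) Mod H)"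
    and "left_Folner G F"
  shows "commuting_ratio G F \<ge> ereal (1 / (real m ^ 2 * real d))"
proof -
  interpret subgroup_with_abelian_quotient G \<Gamma> H
    using assms(1,2,5,8) by (simp add: subgroup_with_abelian_quotient_def
        subgroup_with_abelian_quotient_axioms_def)
  obtain T where T: "finite T" "T \<subseteq> carrier G" "card T \<le> m"
    "\<And>y. y \<in> carrier G \<Longrightarrow> \<exists>t\<in>T. t \<otimes>\<^bsub>G\<^esub> y \<in> \<Gamma>"
    using finite_rcoset_representatives[OF assms(2,3)] assms(4) by metis
  define E where "E n = (\<Sum>t\<in>T. real (card ((t <#\<^bsub>G\<^esub> F n) - F n)) / real (card (F n)))" for n
  have "E \<longlonglongrightarrow> 0"
    unfolding E_def using T(2) assms(9)
    by (intro tendsto_null_sum left_Folner_translate_diff_tendsto_0) auto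
  then have "(\<lambda>n. E n / (real m ^ 2 * real d)) \<longlonglongrightarrow> 0"
    by (simp add: tendsto_divide_zero)
  moreover have "1 / (real m ^ 2 * real d) - E n / (real m ^ 2 * real d)
      \<le> real (card {C \<in> conj_classes G. C \<inter> F n \<noteq> {}}) / real (card (F n))" for n
    using conj_classes_meeting_ratio_ge[OF assms(3,6) T(1,2) _ T(4)] assms(4,7,9) T(3)
    unfolding E_def left_Folner_def by (simp add: diff_divide_distrib)
  ultimately show ?thesis
    unfolding commuting_ratio_def by (rule limsup_ge_of_lower_bound)
qed

end
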